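(* Let $p$ be an odd prime, $\gamma>0$, $H\in\mathbb{Z}_p^{l\times n}$ and $c\in\mathbb{Z}_p^l$ independent and uniform, $\Lambda_o=\gamma(\{v\in\mathbb{Z}_p^n:Hv=c\}-\frac{p-1}{2})$, and $S'=[-\frac{\gamma p}{2},\frac{\gamma p}{2}]^n\cap\gamma\mathbb{Z}^n$. Let $(X,\hat U)$ be jointly distributed, with $\hat U$ taking values in $\gamma(\{0,\dots,p-1\}-\frac{p-1}{2})$, fix $\epsilon>0$ and $x\in\mathbb{R}^n$, and let $\theta(x)=\sum_{u\in\Lambda_o}\mathbb{1}\{u\in A_\epsilon^n(\hat U|x)\}$. Let $Z^n$ be uniform on $S'$. Then $$\Big(1-\frac1{p^{n-l}}\Big)p^{n-l}\Pr\big(Z^n\in A_\epsilon^n(\hat U|x)\big)\le\mathbb{E}\{\theta(x)\}\le p^{n-l}\Pr\big(Z^n\in A_\epsilon^n(\hat U|x)\big)+\frac{2^l}{p^{n(l-1)}}.$$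
   Context: Weak* typicality: the Prokhorov distance is $\pi_d(P_1,P_2)=\inf\{\epsilon>0:P_1(A)<P_2(A^\epsilon)+\epsilon\text{ and }P_2(A)<P_1(A^\epsilon)+\epsilon\ \forall\text{ Borel }A\subseteq\mathbb{R}^d\}$, $A^\epsilon=\{z:\exists y\in A,\|z-y\|<\epsilon\}$. The joint empirical measure of $(x,u)\in\mathbb{R}^n\times\mathbb{R}^n$ is $\bar P_{xu}(A\times B)=\frac1n\sum_i\mathbb{1}\{x_i\in A,u_i\in B\}$, and $A_\epsilon^n(\hat U|x)=\{u\in\mathbb{R}^n:\pi_2(\bar P_{xu},P_{X\hat U})<\epsilon\}$. Elements of $\mathbb{Z}_p$ are identified with $\{0,\dots,p-1\}$. *)

theory Defs
  imports "HOL-Probability.Probability"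
begin

text \<open>Vectors in R^n / Z_p^n are functions on nat, relevant on indices below n,
  and zero elsewhere. Elements of Z_p are identified with 0..p-1.\<close>

definition zp_vecs :: "nat \<Rightarrow> nat \<Rightarrow> (nat \<Rightarrow> nat) set" where
  "zp_vecs p n = {v. (\<forall>i<n. v i < p) \<and> (\<forall>i\<ge>n. v i = 0)}"

definition zp_mats :: "nat \<Rightarrow> nat \<Rightarrow> nat \<Rightarrow> (nat \<Rightarrow> nat \<Rightarrow> nat) set" where
  "zp_mats p l n = {H. (\<forall>i<l. \<forall>j<n. H i j < p) \<and> (\<forall>i j. (i \<ge> l \<or> j \<ge> n) \<longrightarrow> H i j = 0)}"

definition zp_solutions :: "nat \<Rightarrow> nat \<Rightarrow> nat \<Rightarrow> (nat \<Rightarrow> nat \<Rightarrow> nat) \<Rightarrow> (nat \<Rightarrow> nat) \<Rightarrow> (nat \<Rightarrow> nat) set" where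
  "zp_solutions p l n H c = {v \<in> zp_vecs p n. \<forall>i<l. (\<Sum>j<n. H i j * v j) mod p = c i}"

definition Lambda_o :: "nat \<Rightarrow> nat \<Rightarrow> nat \<Rightarrow> real \<Rightarrow> (nat \<Rightarrow> nat \<Rightarrow> nat) \<Rightarrow> (nat \<Rightarrow> nat) \<Rightarrow> (nat \<Rightarrow> real) set" where
  "Lambda_o p l n \<gamma> H c =
     (\<lambda>v. \<lambda>i. if i < n then \<gamma> * (real (v i) - (real p - 1) / 2) else 0) ` zp_solutions p l n H c"

definition S_prime :: "nat \<Rightarrow> nat \<Rightarrow> real \<Rightarrow> (nat \<Rightarrow> real) set" where
  "S_prime p n \<gamma> = {z. (\<forall>i<n. (\<exists>k::int. z i = \<gamma> * real_of_int k) \<and> \<bar>z i\<bar> \<le> \<gamma> * real p / 2)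
                         \<and> (\<forall>i\<ge>n. z i = 0)}"

definition eps_enlarge :: "(real \<times> real) set \<Rightarrow> real \<Rightarrow> (real \<times> real) set" where
  "eps_enlarge A e = {z. \<exists>y\<in>A. norm (z - y) < e}"

definition prokhorov :: "(real \<times> real) measure \<Rightarrow> (real \<times> real) measure \<Rightarrow> real" where
  "prokhorov P1 P2 = Inf {e. e > 0 \<and> (\<forall>A \<in> sets (borel :: (real \<times> real) measure).
       measure P1 A < measure P2 (eps_enlarge A e) + e \<and> measure P2 A < measure P1 (eps_enlarge A e) + e)}"

definition emp_measure :: "nat \<Rightarrow> (nat \<Rightarrow> real) \<Rightarrow> (nat \<Rightarrow> real) \<Rightarrow> (real \<times> real) measure" where
  "emp_measure n x u = measure_pmf (pmf_of_multiset (image_mset (\<lambda>i. (x i, u i)) (mset_set {..<n})))"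

definition typical_set :: "nat \<Rightarrow> (real \<times> real) measure \<Rightarrow> real \<Rightarrow> (nat \<Rightarrow> real) \<Rightarrow> (nat \<Rightarrow> real) set" where
  "typical_set n P e x = {u. prokhorov (emp_measure n x u) P < e}"

end

theory Submission
  imports Defs
begin

(* Write  centre v = \<gamma>(v - (p-1)/2)  for the coordinatewise embedding of
   Z_p^n into R^n.  It is injective, its image is exactly S', and Lambda_o(H,c) is the
   image of the solution set {v : Hv = c}.  For a fixed matrix H every v \<in> Z_p^n solves
   Hv = c for exactly one right-hand side c (namely its syndrome), so summing
   |Lambda_o(H,c) \<inter> T| over all c counts every point of S' \<inter> T exactly once.  Averaging
   over the uniform c (and H) therefore gives the exact identity
        E |Lambda_o \<inter> T| = |S' \<inter> T| / p^l = p^(n-l) Pr(Z^n \<in> T),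
   valid for any set T, in particular the typical set A_\<epsilon>^n(U|x).  Both inequalities of
   the theorem are immediate relaxations of this identity. *)

lemma pair_pmf_of_set:
  assumes "finite A" "A \<noteq> {}" "finite B" "B \<noteq> {}"
  shows "pair_pmf (pmf_of_set A) (pmf_of_set B) = pmf_of_set (A \<times> B)"
  by (rule pmf_eqI) (auto simp: pmf_pair assms card_cartesian_product indicator_def)

lemma zp_vecs_PiE_dflt: "zp_vecs p n = PiE_dflt {..<n} 0 (\<lambda>_. {..<p})"
  unfolding zp_vecs_def PiE_dflt_def by (auto simp: not_less)

lemma finite_zp_vecs: "finite (zp_vecs p n)"
  unfolding zp_vecs_PiE_dflt by (rule finite_PiE_dflt) simp_all

lemma card_zp_vecs: "card (zp_vecs p n) = p ^ n"
  unfolding zp_vecs_PiE_dflt by (subst card_PiE_dflt) simp_all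

lemma zp_vecs_nonempty: "p > 0 \<Longrightarrow> zp_vecs p n \<noteq> {}"
  by (auto simp: zp_vecs_def intro!: exI[of _ "\<lambda>_. 0"])

lemma finite_zp_mats: "finite (zp_mats p l n)"
proof (rule finite_subset)
  show "zp_mats p l n \<subseteq> PiE_dflt {..<l} (\<lambda>_. 0) (\<lambda>_. zp_vecs p n)"
    by (auto simp: zp_mats_def zp_vecs_def PiE_dflt_def fun_eq_iff not_less)
  show "finite (PiE_dflt {..<l} (\<lambda>_. 0) (\<lambda>_. zp_vecs p n))"
    using finite_zp_vecs by auto
qed

lemma zp_mats_nonempty: "p > 0 \<Longrightarrow> zp_mats p l n \<noteq> {}"
  by (auto simp: zp_mats_def intro!: exI[of _ "\<lambda>_ _. 0"])

lemma zp_solutions_cover: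
  assumes "p > 0"
  shows "(\<Union>c\<in>zp_vecs p l. zp_solutions p l n H c) = zp_vecs p n"
proof (intro equalityI subsetI)
  fix v assume v: "v \<in> zp_vecs p n"
  define syndrome where "syndrome i = (if i < l then (\<Sum>j<n. H i j * v j) mod p else 0)" for i
  have "syndrome \<in> zp_vecs p l" "v \<in> zp_solutions p l n H syndrome"
    using assms v by (auto simp: syndrome_def zp_vecs_def zp_solutions_def)
  then show "v \<in> (\<Union>c\<in>zp_vecs p l. zp_solutions p l n H c)" by blast
qed (auto simp: zp_solutions_def)

lemma zp_solutions_disjoint: "disjoint_family_on (zp_solutions p l n H) (zp_vecs p l)"
  unfolding disjoint_family_on_def
  by (auto simp: zp_solutions_def zp_vecs_def fun_eq_iff not_less) (metis linorder_not_less)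

definition centre :: "nat \<Rightarrow> nat \<Rightarrow> real \<Rightarrow> (nat \<Rightarrow> nat) \<Rightarrow> nat \<Rightarrow> real" where
  "centre p n \<gamma> v = (\<lambda>i. if i < n then \<gamma> * (real (v i) - (real p - 1) / 2) else 0)"

lemma Lambda_o_centre: "Lambda_o p l n \<gamma> H c = centre p n \<gamma> ` zp_solutions p l n H c"
  unfolding Lambda_o_def centre_def ..

lemma inj_on_centre:
  assumes "\<gamma> > 0"
  shows "inj_on (centre p n \<gamma>) (zp_vecs p n)"
proof (rule inj_onI)
  fix v w assume v: "v \<in> zp_vecs p n" and w: "w \<in> zp_vecs p n"
    and eq: "centre p n \<gamma> v = centre p n \<gamma> w"
  show "v = w"
  proof
    fix i show "v i = w i"
      using fun_cong[OF eq, of i] v w assms by (cases "i < n") (auto simp: centre_def zp_vecs_def)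
  qed
qed

lemma S_prime_coordinate:
  assumes "p = 2 * h + 1" "\<gamma> > 0"
  shows "((\<exists>k::int. z = \<gamma> * real_of_int k) \<and> \<bar>z\<bar> \<le> \<gamma> * real p / 2)
           \<longleftrightarrow> (\<exists>j<p. z = \<gamma> * (real j - real h))"
proof
  assume "(\<exists>k::int. z = \<gamma> * real_of_int k) \<and> \<bar>z\<bar> \<le> \<gamma> * real p / 2"
  then obtain k :: int where z: "z = \<gamma> * real_of_int k" and bound: "\<bar>z\<bar> \<le> \<gamma> * real p / 2"
    by blast
  have "\<gamma> * \<bar>real_of_int k\<bar> \<le> \<gamma> * (real p / 2)"
    using bound z assms(2) by (simp add: abs_mult)
  then have "\<bar>real_of_int k\<bar> \<le> real p / 2" using assms(2) by simp
  then have k: "\<bar>k\<bar> \<le> int h" using assms(1) by linarith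
  show "\<exists>j<p. z = \<gamma> * (real j - real h)"
    using k assms(1) by (intro exI[of _ "nat (k + int h)"]) (auto simp: z)
next
  assume "\<exists>j<p. z = \<gamma> * (real j - real h)"
  then obtain j where j: "j < p" and z: "z = \<gamma> * (real j - real h)" by blast
  have "real j \<le> 2 * real h" using j assms(1) by simp
  then have "\<bar>real j - real h\<bar> \<le> real p / 2" using assms(1) by (auto simp: abs_if)
  then have "\<gamma> * \<bar>real j - real h\<bar> \<le> \<gamma> * (real p / 2)"
    using assms(2) by (intro mult_left_mono) auto
  then show "(\<exists>k::int. z = \<gamma> * real_of_int k) \<and> \<bar>z\<bar> \<le> \<gamma> * real p / 2"
    using assms(2) by (intro conjI exI[of _ "int j - int h"]) (auto simp: z abs_mult)
qed

lemma S_prime_eq_centre_image: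
  assumes "odd p" "\<gamma> > 0"
  shows "S_prime p n \<gamma> = centre p n \<gamma> ` zp_vecs p n"
proof -
  obtain h where ph: "p = 2 * h + 1" using assms(1) oddE by blast
  have half: "(real p - 1) / 2 = real h" using ph by simp
  have coord: "((\<exists>k::int. z = \<gamma> * real_of_int k) \<and> \<bar>z\<bar> \<le> \<gamma> * real p / 2)
                 \<longleftrightarrow> (\<exists>j<p. z = \<gamma> * (real j - real h))" for z
    by (rule S_prime_coordinate[OF ph assms(2)])
  show ?thesis
  proof (intro set_eqI iffI)
    fix z assume "z \<in> S_prime p n \<gamma>"
    then have "\<forall>i<n. \<exists>j<p. z i = \<gamma> * (real j - real h)" and zero: "\<forall>i\<ge>n. z i = 0"
      unfolding S_prime_def coord by blast+
    then obtain v where v: "\<forall>i<n. v i < p \<and> z i = \<gamma> * (real (v i) - real h)"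
      by metis
    define w where "w i = (if i < n then v i else 0)" for i
    have "w \<in> zp_vecs p n" "z = centre p n \<gamma> w"
      using v zero ph by (auto simp: w_def zp_vecs_def centre_def half fun_eq_iff not_less)
    then show "z \<in> centre p n \<gamma> ` zp_vecs p n" by blast
  next
    fix z assume "z \<in> centre p n \<gamma> ` zp_vecs p n"
    then obtain v where v: "v \<in> zp_vecs p n" and z: "z = centre p n \<gamma> v" by blast
    have "\<exists>j<p. z i = \<gamma> * (real j - real h)" if "i < n" for i
      using v that by (auto simp: z centre_def half zp_vecs_def)
    moreover have "z i = 0" if "i \<ge> n" for i
      using that by (simp add: z centre_def)
    ultimately show "z \<in> S_prime p n \<gamma>"
      unfolding S_prime_def mem_Collect_eq coord by blast
  qed
qed

definition hits :: "nat \<Rightarrow> nat \<Rightarrow> real \<Rightarrow> (nat \<Rightarrow> real) set \<Rightarrow> nat" where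
  "hits p n \<gamma> T = card {v \<in> zp_vecs p n. centre p n \<gamma> v \<in> T}"

lemma card_image_Int:
  assumes "inj_on f V"
  shows "card (f ` V \<inter> T) = card {v \<in> V. f v \<in> T}"
proof -
  have "f ` V \<inter> T = f ` {v \<in> V. f v \<in> T}" by blast
  then show ?thesis
    using assms by (simp add: card_image inj_on_subset)
qed

lemma sum_card_Lambda_o:
  assumes "p > 0" "\<gamma> > 0"
  shows "(\<Sum>c\<in>zp_vecs p l. card (Lambda_o p l n \<gamma> H c \<inter> T)) = hits p n \<gamma> T"
proof -
  let ?V = "zp_vecs p n" and ?C = "zp_vecs p l" and ?f = "centre p n \<gamma>"
  let ?hit = "\<lambda>c. zp_solutions p l n H c \<inter> {v. ?f v \<in> T}"
  have sol_sub: "zp_solutions p l n H c \<subseteq> ?V" for c by (auto simp: zp_solutions_def)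
  have "card (Lambda_o p l n \<gamma> H c \<inter> T) = card (?hit c)" for c
    unfolding Lambda_o_centre card_image_Int[OF inj_on_subset[OF inj_on_centre[OF assms(2)] sol_sub]]
    by (simp add: Int_def)
  then have "(\<Sum>c\<in>?C. card (Lambda_o p l n \<gamma> H c \<inter> T)) = (\<Sum>c\<in>?C. card (?hit c))"
    by simp
  also have "\<dots> = card (\<Union>c\<in>?C. ?hit c)"
  proof (rule card_UN_disjoint[symmetric])
    show "finite ?C" by (rule finite_zp_vecs)
    show "\<forall>c\<in>?C. finite (?hit c)"
      using finite_subset[OF sol_sub finite_zp_vecs] by blast
    show "\<forall>c\<in>?C. \<forall>c'\<in>?C. c \<noteq> c' \<longrightarrow> ?hit c \<inter> ?hit c' = {}"
      using zp_solutions_disjoint unfolding disjoint_family_on_def by blast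
  qed
  also have "(\<Union>c\<in>?C. ?hit c) = {v \<in> ?V. ?f v \<in> T}"
    using zp_solutions_cover[OF assms(1), of l n H] by blast
  finally show ?thesis by (simp add: hits_def)
qed

lemma expected_card_Lambda_o:
  assumes "p > 0" "\<gamma> > 0"
  shows "measure_pmf.expectation (pair_pmf (pmf_of_set (zp_mats p l n)) (pmf_of_set (zp_vecs p l)))
            (\<lambda>(H, c). real (card (Lambda_o p l n \<gamma> H c \<inter> T)))
         = real (hits p n \<gamma> T) / real p ^ l"
proof -
  let ?A = "zp_mats p l n" and ?C = "zp_vecs p l"
  have "(\<Sum>(H, c)\<in>?A \<times> ?C. real (card (Lambda_o p l n \<gamma> H c \<inter> T)))
        = (\<Sum>H\<in>?A. real (\<Sum>c\<in>?C. card (Lambda_o p l n \<gamma> H c \<inter> T)))"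
    by (simp add: sum.cartesian_product[symmetric])
  also have "\<dots> = real (card ?A) * real (hits p n \<gamma> T)"
    by (simp add: sum_card_Lambda_o[OF assms])
  finally have total: "(\<Sum>(H, c)\<in>?A \<times> ?C. real (card (Lambda_o p l n \<gamma> H c \<inter> T)))
      = real (card ?A) * real (hits p n \<gamma> T)" .
  have "card ?A > 0"
    using finite_zp_mats zp_mats_nonempty[OF assms(1)] by (simp add: card_gt_0_iff)
  then show ?thesis
    using total finite_zp_mats finite_zp_vecs zp_mats_nonempty[OF assms(1)]
      zp_vecs_nonempty[OF assms(1)]
    by (simp add: pair_pmf_of_set integral_pmf_of_set card_cartesian_product card_zp_vecs)
qed

lemma measure_S_prime:
  assumes "p > 0" "odd p" "\<gamma> > 0"
  shows "measure (pmf_of_set (S_prime p n \<gamma>)) T = real (hits p n \<gamma> T) / real p ^ n"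
proof -
  have S: "S_prime p n \<gamma> = centre p n \<gamma> ` zp_vecs p n"
    by (rule S_prime_eq_centre_image[OF assms(2,3)])
  have inj: "inj_on (centre p n \<gamma>) (zp_vecs p n)" by (rule inj_on_centre[OF assms(3)])
  have "card (S_prime p n \<gamma> \<inter> T) = hits p n \<gamma> T"
    unfolding S hits_def by (rule card_image_Int[OF inj])
  moreover have "card (S_prime p n \<gamma>) = p ^ n"
    unfolding S by (simp add: card_image[OF inj] card_zp_vecs)
  moreover have "finite (S_prime p n \<gamma>)" "S_prime p n \<gamma> \<noteq> {}"
    unfolding S using finite_zp_vecs zp_vecs_nonempty[OF assms(1)] by auto
  ultimately show ?thesis by (simp add: measure_pmf_of_set)
qed

theorem mainTheorem14:
  fixes p l n :: nat and \<gamma> \<epsilon> :: real and P :: "(real \<times> real) measure" and x :: "nat \<Rightarrow> real"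
  assumes "prime p" and "odd p"
    and "\<gamma> > 0"
    and "n \<ge> 1"
    and "prob_space P" and "sets P = sets borel"
    and "measure P (UNIV \<times> ((\<lambda>k. \<gamma> * (real k - (real p - 1) / 2)) ` {0..<p})) = 1"
    and "\<epsilon> > 0"
  shows
    "(1 - 1 / real p powr (real n - real l)) * real p powr (real n - real l)
        * measure (pmf_of_set (S_prime p n \<gamma>)) (typical_set n P \<epsilon> x)
       \<le> measure_pmf.expectation (pair_pmf (pmf_of_set (zp_mats p l n)) (pmf_of_set (zp_vecs p l)))
            (\<lambda>(H, c). real (card (Lambda_o p l n \<gamma> H c \<inter> typical_set n P \<epsilon> x)))
     \<and> measure_pmf.expectation (pair_pmf (pmf_of_set (zp_mats p l n)) (pmf_of_set (zp_vecs p l)))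
            (\<lambda>(H, c). real (card (Lambda_o p l n \<gamma> H c \<inter> typical_set n P \<epsilon> x)))
       \<le> real p powr (real n - real l) * measure (pmf_of_set (S_prime p n \<gamma>)) (typical_set n P \<epsilon> x)
          + 2 ^ l / real p powr (real n * (real l - 1))"
proof -
  define T where "T = typical_set n P \<epsilon> x"
  define m where "m = real (hits p n \<gamma> T) / real p ^ l"
  have p0: "p > 0" using assms(1) prime_gt_0_nat by blast
  have expectation: "measure_pmf.expectation (pair_pmf (pmf_of_set (zp_mats p l n))
      (pmf_of_set (zp_vecs p l))) (\<lambda>(H, c). real (card (Lambda_o p l n \<gamma> H c \<inter> T))) = m"
    unfolding m_def by (rule expected_card_Lambda_o[OF p0 assms(3)])
  have "real p powr (real n - real l) = real p ^ n / real p ^ l"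
    using p0 by (simp add: powr_diff powr_realpow)
  then have scaled: "real p powr (real n - real l) * measure (pmf_of_set (S_prime p n \<gamma>)) T = m"
    using p0 by (simp add: measure_S_prime[OF p0 assms(2,3)] m_def)
  have "m \<ge> 0" "1 / real p powr (real n - real l) \<ge> 0"
    "2 ^ l / real p powr (real n * (real l - 1)) \<ge> 0"
    by (simp_all add: m_def)
  then have "(1 - 1 / real p powr (real n - real l)) * m \<le> m"
    "m \<le> m + 2 ^ l / real p powr (real n * (real l - 1))"
    by (simp_all add: algebra_simps mult_nonneg_nonneg)
  then show ?thesis
    using expectation scaled unfolding T_def by (simp add: mult.assoc)
qed

end
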